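(* Let $\mathcal X$ and $\mathcal Y$ be Banach spaces, let $A$ be a closed, densely defined linear operator from $\operatorname{dom}A\subset\mathcal X$ to $\mathcal Y$, and let $B$ be a closed, densely defined linear operator from $\operatorname{dom}B\subset\mathcal Y$ to $\mathcal X$. Assume $\rho(AB)\neq\emptyset$ and $\rho(BA)\neq\emptyset$. Then for every $\lambda\in\mathbb C\setminus\{0\}$: (i) $\operatorname{ran}(AB-\lambda)$ is closed if and only if $\operatorname{ran}(BA-\lambda)$ is closed; (ii) $\operatorname{ran}(AB-\lambda)$ is dense in $\mathcal Y$ if and only if $\operatorname{ran}(BA-\lambda)$ is dense in $\mathcal X$; (iii) $AB-\lambda$ is upper semi-Fredholm if and only if $BA-\lambda$ is upper semi-Fredholm; (iv) $AB-\lambda$ is lower semi-Fredholm if and only if $BA-\lambda$ is lower semi-Fredholm. Consequently, $\sigma_{ap}(AB)\setminus\{0\}=\sigma_{ap}(BA)\setminus\{0\}$, $\sigma_c(AB)\setminus\{0\}=\sigma_c(BA)\setminus\{0\}$, $\sigma_r(AB)\setminus\{0\}=\sigma_r(BA)\setminus\{0\}$, and $\sigma_{ess}(AB)\setminus\{0\}=\sigma_{ess}(BA)\setminus\{0\}$.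
   Context: Products have natural domains: $\operatorname{dom}(AB)=\{y\in\operatorname{dom}B: By\in\operatorname{dom}A\}$, $\operatorname{dom}(BA)=\{x\in\operatorname{dom}A: Ax\in\operatorname{dom}B\}$. For a linear operator $S$ in a Banach space $\mathcal Z$: $\rho(S)$ is the set of $\lambda\in\mathbb C$ with $S-\lambda:\operatorname{dom}S\to\mathcal Z$ bijective and $(S-\lambda)^{-1}$ bounded; $\sigma(S)=\mathbb C\setminus\rho(S)$. For closed densely defined $S$: the approximate point spectrum $\sigma_{ap}(S)$ is the set of $\lambda$ for which there is a sequence $(x_n)\subset\operatorname{dom}S$, $\|x_n\|=1$, $(S-\lambda)x_n\to0$; the continuous spectrum $\sigma_c(S)$ is the set of $\lambda\in\sigma(S)$ with $S-\lambda$ injective and $\operatorname{ran}(S-\lambda)$ dense; the residual spectrum $\sigma_r(S)$ is the set of $\lambda$ with $S-\lambda$ injective and $\operatorname{ran}(S-\lambda)$ not dense. $S$ is upper semi-Fredholm if $\operatorname{ran}S$ is closed and $\ker S$ is finite-dimensional; lower semi-Fredholm if $\operatorname{ran}S$ is (closed and) of finite codimension; Fredholm if both. $\sigma_{ess}(S)=\{\lambda\in\mathbb C: S-\lambda \text{ is not Fredholm}\}$. *)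

theory Defs
  imports "HOL-Analysis.Analysis"
begin

text \<open>HOL-Analysis only provides real normed spaces; a complex Banach space is a real
Banach space with a compatible complex scalar multiplication.\<close>

class complex_banach = banach +
  fixes scaleC :: "complex \<Rightarrow> 'a \<Rightarrow> 'a" (infixr \<open>*\<^sub>C\<close> 75)
  assumes scaleC_add_right: "a *\<^sub>C (x + y) = a *\<^sub>C x + a *\<^sub>C y"
    and scaleC_add_left: "(a + b) *\<^sub>C x = a *\<^sub>C x + b *\<^sub>C x"
    and scaleC_scaleC: "a *\<^sub>C (b *\<^sub>C x) = (a * b) *\<^sub>C x"
    and scaleC_one: "1 *\<^sub>C x = x"
    and scaleR_scaleC: "scaleR r x = complex_of_real r *\<^sub>C x"
    and norm_scaleC: "norm (a *\<^sub>C x) = cmod a * norm x"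

text \<open>An (unbounded) operator is a pair of a domain D and a map T (only its values on D matter).\<close>

definition csubspace :: "'a::complex_banach set \<Rightarrow> bool" where
  "csubspace D \<longleftrightarrow> 0 \<in> D \<and> (\<forall>x\<in>D. \<forall>y\<in>D. x + y \<in> D) \<and> (\<forall>c. \<forall>x\<in>D. c *\<^sub>C x \<in> D)"

definition linear_op :: "'a::complex_banach set \<Rightarrow> ('a \<Rightarrow> 'b::complex_banach) \<Rightarrow> bool" where
  "linear_op D T \<longleftrightarrow> csubspace D \<and>
     (\<forall>x\<in>D. \<forall>y\<in>D. T (x + y) = T x + T y) \<and> (\<forall>c. \<forall>x\<in>D. T (c *\<^sub>C x) = c *\<^sub>C T x)"

definition closed_op :: "'a::complex_banach set \<Rightarrow> ('a \<Rightarrow> 'b::complex_banach) \<Rightarrow> bool" where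
  "closed_op D T \<longleftrightarrow> closed ((\<lambda>x. (x, T x)) ` D)"

definition densely_defined :: "'a::complex_banach set \<Rightarrow> bool" where
  "densely_defined D \<longleftrightarrow> closure D = UNIV"

definition prod_dom :: "'y set \<Rightarrow> ('y \<Rightarrow> 'x) \<Rightarrow> 'x set \<Rightarrow> 'y set" where
  "prod_dom DB B DA = {y \<in> DB. B y \<in> DA}"

definition shift :: "('a \<Rightarrow> 'a) \<Rightarrow> complex \<Rightarrow> 'a \<Rightarrow> 'a::complex_banach" where
  "shift S l = (\<lambda>x. S x - l *\<^sub>C x)"

definition op_range :: "'a set \<Rightarrow> ('a \<Rightarrow> 'b) \<Rightarrow> 'b set" where
  "op_range D T = T ` D"

definition op_kernel :: "'a set \<Rightarrow> ('a \<Rightarrow> 'b::zero) \<Rightarrow> 'a set" where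
  "op_kernel D T = {x \<in> D. T x = 0}"

definition cspan :: "'a::complex_banach set \<Rightarrow> 'a set" where
  "cspan F = {y. \<exists>S c. finite S \<and> S \<subseteq> F \<and> y = (\<Sum>x\<in>S. c x *\<^sub>C x)}"

definition finite_dimensional :: "'a::complex_banach set \<Rightarrow> bool" where
  "finite_dimensional V \<longleftrightarrow> (\<exists>F. finite F \<and> V \<subseteq> cspan F)"

definition finite_codim :: "'a::complex_banach set \<Rightarrow> bool" where
  "finite_codim V \<longleftrightarrow> (\<exists>F. finite F \<and> {v + w | v w. v \<in> V \<and> w \<in> cspan F} = UNIV)"

definition resolvent_set :: "'a::complex_banach set \<Rightarrow> ('a \<Rightarrow> 'a) \<Rightarrow> complex set" where
  "resolvent_set D S = {l. bij_betw (shift S l) D UNIV \<and>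
      (\<exists>C. \<forall>z. norm (inv_into D (shift S l) z) \<le> C * norm z)}"

definition spectrum_op :: "'a::complex_banach set \<Rightarrow> ('a \<Rightarrow> 'a) \<Rightarrow> complex set" where
  "spectrum_op D S = - resolvent_set D S"

definition ap_spectrum :: "'a::complex_banach set \<Rightarrow> ('a \<Rightarrow> 'a) \<Rightarrow> complex set" where
  "ap_spectrum D S = {l. \<exists>x. (\<forall>n. x n \<in> D \<and> norm (x n) = 1) \<and>
      (\<lambda>n. shift S l (x n)) \<longlonglongrightarrow> 0}"

definition cont_spectrum :: "'a::complex_banach set \<Rightarrow> ('a \<Rightarrow> 'a) \<Rightarrow> complex set" where
  "cont_spectrum D S = {l \<in> spectrum_op D S. inj_on (shift S l) D \<and>
      closure (op_range D (shift S l)) = UNIV}"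

definition res_spectrum :: "'a::complex_banach set \<Rightarrow> ('a \<Rightarrow> 'a) \<Rightarrow> complex set" where
  "res_spectrum D S = {l. inj_on (shift S l) D \<and>
      closure (op_range D (shift S l)) \<noteq> UNIV}"

definition upper_semi_fredholm :: "'a::complex_banach set \<Rightarrow> ('a \<Rightarrow> 'b::complex_banach) \<Rightarrow> bool" where
  "upper_semi_fredholm D T \<longleftrightarrow> closed (op_range D T) \<and> finite_dimensional (op_kernel D T)"

definition lower_semi_fredholm :: "'a::complex_banach set \<Rightarrow> ('a \<Rightarrow> 'b::complex_banach) \<Rightarrow> bool" where
  "lower_semi_fredholm D T \<longleftrightarrow> closed (op_range D T) \<and> finite_codim (op_range D T)"

definition fredholm :: "'a::complex_banach set \<Rightarrow> ('a \<Rightarrow> 'b::complex_banach) \<Rightarrow> bool" where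
  "fredholm D T \<longleftrightarrow> upper_semi_fredholm D T \<and> lower_semi_fredholm D T"

definition ess_spectrum :: "'a set \<Rightarrow> ('a \<Rightarrow> 'a::complex_banach) \<Rightarrow> complex set" where
  "ess_spectrum D S = {l. \<not> fredholm D (shift S l)}"

end

theory Submission
  imports Defs
begin

text \<open>
  Let \<open>\<mu> \<in> \<rho>(AB)\<close>, \<open>\<nu> \<in> \<rho>(BA)\<close>, \<open>\<lambda> \<noteq> 0\<close> and \<open>R = (BA - \<nu>)\<^sup>-\<^sup>1\<close>.  Expanding
  \<open>(BA - \<lambda>)(R + (\<lambda> - \<nu>) R\<^sup>2) = I - (\<lambda> - \<nu>)\<^sup>2 R\<^sup>2\<close> and \<open>\<lambda> R\<^sup>2 = BA R\<^sup>2 - (BA - \<lambda>) R\<^sup>2\<close>,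
  every vector splits as
    \<open>x = (BA - \<lambda>) p + ((\<lambda> - \<nu>)\<^sup>2 / \<lambda>) \<cdot> B A R\<^sup>2 x\<close>  for some \<open>p \<in> dom(BA)\<close>.
  The everywhere defined closed operators \<open>P = B (AB - \<mu>)\<^sup>-\<^sup>1\<close> and \<open>M = A R\<close> are bounded by
  the closed graph theorem; \<open>P\<close> maps \<open>ran(AB - \<lambda>)\<close> into \<open>ran(BA - \<lambda>)\<close>, \<open>M\<close> maps
  \<open>ran(BA - \<lambda>)\<close> into \<open>ran(AB - \<lambda>)\<close>, and \<open>B A R\<^sup>2 x = P ((AB - \<mu>) A R\<^sup>2 x)\<close>.  With the
  decomposition this transfers density, closedness, finite codimension and surjectivity
  of the range from \<open>AB - \<lambda>\<close> to \<open>BA - \<lambda>\<close>; kernels correspond via \<open>x \<mapsto> \<lambda>\<^sup>-\<^sup>1 A x\<close>, whose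
  left inverse is \<open>B\<close>.  Exchanging the roles of \<open>A\<close> and \<open>B\<close> gives the converse
  directions.  The spectral identities then follow from the characterisations
  \<open>\<lambda> \<notin> \<sigma>\<^sub>a\<^sub>p(S)\<close> iff \<open>S - \<lambda>\<close> is injective with closed range, and \<open>\<lambda> \<in> \<rho>(S)\<close> iff
  \<open>S - \<lambda>\<close> is bijective, both consequences of the closed graph theorem.
\<close>

lemma scaleC_zero_right [simp]: "c *\<^sub>C (0::'a::complex_banach) = 0"
proof -
  have "c *\<^sub>C (0::'a) = c *\<^sub>C 0 + c *\<^sub>C 0" by (metis add.right_neutral scaleC_add_right)
  then show ?thesis by simp
qed

lemma scaleC_zero_left [simp]: "0 *\<^sub>C (x::'a::complex_banach) = 0"
proof -
  have "0 *\<^sub>C x = 0 *\<^sub>C x + 0 *\<^sub>C x" by (metis add.right_neutral scaleC_add_left)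
  then show ?thesis by simp
qed

lemma scaleC_minus_right: "c *\<^sub>C (- x::'a::complex_banach) = - (c *\<^sub>C x)"
proof -
  have "c *\<^sub>C (- x) + c *\<^sub>C x = 0" by (simp flip: scaleC_add_right)
  then show ?thesis by (simp add: eq_neg_iff_add_eq_0)
qed

lemma scaleC_diff_right: "c *\<^sub>C (x - y::'a::complex_banach) = c *\<^sub>C x - c *\<^sub>C y"
  by (metis diff_conv_add_uminus scaleC_add_right scaleC_minus_right)

lemma scaleC_minus_left: "(- c) *\<^sub>C (x::'a::complex_banach) = - (c *\<^sub>C x)"
proof -
  have "(- c) *\<^sub>C x + c *\<^sub>C x = 0" by (simp flip: scaleC_add_left)
  then show ?thesis by (simp add: eq_neg_iff_add_eq_0)
qed

lemma scaleC_diff_left: "(a - b) *\<^sub>C (x::'a::complex_banach) = a *\<^sub>C x - b *\<^sub>C x"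
  by (metis diff_conv_add_uminus scaleC_add_left scaleC_minus_left)

lemma bounded_linear_scaleC: "bounded_linear (\<lambda>x::'a::complex_banach. c *\<^sub>C x)"
  by (rule bounded_linear_intro[where K="cmod c"])
     (auto simp: scaleC_add_right scaleR_scaleC scaleC_scaleC mult.commute norm_scaleC)

lemma continuous_on_scaleC [continuous_intros]:
  "continuous_on S f \<Longrightarrow> continuous_on S (\<lambda>x. c *\<^sub>C (f x::'a::complex_banach))"
  using bounded_linear.continuous_on[OF bounded_linear_scaleC] by blast

interpretation cvs: vector_space "scaleC :: complex \<Rightarrow> 'a::complex_banach \<Rightarrow> 'a"
  by unfold_locales (auto simp: scaleC_add_right scaleC_add_left scaleC_scaleC scaleC_one)

lemma cspan_eq_span: "cspan F = cvs.span F"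
  unfolding cspan_def cvs.span_explicit by auto

lemma finite_dimensional_iff_span: "finite_dimensional V \<longleftrightarrow> (\<exists>F. finite F \<and> V \<subseteq> cvs.span F)"
  unfolding finite_dimensional_def cspan_eq_span ..

lemma finite_codim_iff_span:
  "finite_codim V \<longleftrightarrow> (\<exists>F. finite F \<and> (\<forall>x. \<exists>v\<in>V. x - v \<in> cvs.span F))"
proof -
  have "{v + w |v w. v \<in> V \<and> w \<in> cvs.span F} = UNIV \<longleftrightarrow> (\<forall>x. \<exists>v\<in>V. x - v \<in> cvs.span F)"
    for F :: "'a set"
  proof
    assume sum: "{v + w |v w. v \<in> V \<and> w \<in> cvs.span F} = UNIV"
    show "\<forall>x. \<exists>v\<in>V. x - v \<in> cvs.span F"
    proof
      fix x
      have "x \<in> {v + w |v w. v \<in> V \<and> w \<in> cvs.span F}" using sum by simp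
      then obtain v w where "x = v + w" "v \<in> V" "w \<in> cvs.span F" by blast
      then show "\<exists>v\<in>V. x - v \<in> cvs.span F" by (intro bexI[of _ v]) auto
    qed
  next
    assume approx: "\<forall>x. \<exists>v\<in>V. x - v \<in> cvs.span F"
    have "x \<in> {v + w |v w. v \<in> V \<and> w \<in> cvs.span F}" for x
    proof -
      obtain v where "v \<in> V" "x - v \<in> cvs.span F" using approx by blast
      then show ?thesis by (intro CollectI exI[of _ v] exI[of _ "x - v"]) auto
    qed
    then show "{v + w |v w. v \<in> V \<and> w \<in> cvs.span F} = UNIV" by blast
  qed
  then show ?thesis unfolding finite_codim_def cspan_eq_span by blast
qed

lemma image_closure_into_closure:
  assumes "continuous_on UNIV f" "f ` V \<subseteq> closure W"
  shows "f ` closure V \<subseteq> closure W"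
  by (rule image_closure_subset) (use assms continuous_on_subset[OF assms(1)] in auto)

lemma closure_subspace:
  fixes V :: "'a::complex_banach set"
  assumes V: "cvs.subspace V"
  shows "cvs.subspace (closure V)"
proof -
  have translate: "(\<lambda>b. a + b) ` closure V \<subseteq> closure V" if "a \<in> V" for a
  proof (rule image_closure_into_closure)
    show "continuous_on UNIV (\<lambda>b. a + b)" by (intro continuous_intros)
    show "(\<lambda>b. a + b) ` V \<subseteq> closure V" using V that cvs.subspace_add closure_subset by blast
  qed
  have add: "(\<lambda>a. a + b) ` closure V \<subseteq> closure V" if "b \<in> closure V" for b
    by (rule image_closure_into_closure) (use translate that in \<open>auto intro: continuous_intros\<close>)
  have scale: "(\<lambda>a. c *\<^sub>C a) ` closure V \<subseteq> closure V" for c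
  proof (rule image_closure_into_closure)
    show "continuous_on UNIV (\<lambda>a. c *\<^sub>C a)" by (intro continuous_intros)
    show "(\<lambda>a. c *\<^sub>C a) ` V \<subseteq> closure V" using V cvs.subspace_scale closure_subset by blast
  qed
  show ?thesis unfolding cvs.subspace_def
    using add scale closure_subset cvs.subspace_0[OF V] by blast
qed

context
  fixes D :: "'a::complex_banach set" and T :: "'a \<Rightarrow> 'b::complex_banach"
  assumes lin: "linear_op D T"
begin

lemma linop_zero_in: "0 \<in> D"
  using lin unfolding linear_op_def csubspace_def by auto

lemma linop_add_in: "x \<in> D \<Longrightarrow> y \<in> D \<Longrightarrow> x + y \<in> D"
  using lin unfolding linear_op_def csubspace_def by auto

lemma linop_scale_in: "x \<in> D \<Longrightarrow> c *\<^sub>C x \<in> D"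
  using lin unfolding linear_op_def csubspace_def by auto

lemma linop_add: "x \<in> D \<Longrightarrow> y \<in> D \<Longrightarrow> T (x + y) = T x + T y"
  using lin unfolding linear_op_def by auto

lemma linop_scale: "x \<in> D \<Longrightarrow> T (c *\<^sub>C x) = c *\<^sub>C T x"
  using lin unfolding linear_op_def by auto

lemma linop_zero: "T 0 = 0"
  using linop_scale[OF linop_zero_in, of 0] by simp

lemma linop_diff_in: "x \<in> D \<Longrightarrow> y \<in> D \<Longrightarrow> x - y \<in> D"
  using linop_add_in[of x "(-1) *\<^sub>C y"] linop_scale_in[of y "-1"]
  by (simp add: scaleC_minus_left scaleC_one)

lemma linop_diff: "x \<in> D \<Longrightarrow> y \<in> D \<Longrightarrow> T (x - y) = T x - T y"
  using linop_add[of x "(-1) *\<^sub>C y"] linop_scale_in[of y "-1"] linop_scale[of y "-1"]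
  by (simp add: scaleC_minus_left scaleC_one)

lemma linop_scaleR_in: "x \<in> D \<Longrightarrow> r *\<^sub>R x \<in> D"
  by (simp add: scaleR_scaleC linop_scale_in)

lemma linop_scaleR: "x \<in> D \<Longrightarrow> T (r *\<^sub>R x) = r *\<^sub>R T x"
  by (simp add: scaleR_scaleC linop_scale)

lemma linop_sum:
  "finite F \<Longrightarrow> F \<subseteq> D \<Longrightarrow> (\<Sum>s\<in>F. c s *\<^sub>C s) \<in> D \<and> T (\<Sum>s\<in>F. c s *\<^sub>C s) = (\<Sum>s\<in>F. c s *\<^sub>C T s)"
  by (induction F rule: finite_induct)
     (auto simp: linop_zero_in linop_zero linop_add_in linop_scale_in linop_add linop_scale)

lemma linop_span:
  assumes "F \<subseteq> D" "x \<in> cvs.span F"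
  shows "T x \<in> cvs.span (T ` F)"
proof -
  obtain G c where G: "finite G" "G \<subseteq> F" "x = (\<Sum>a\<in>G. c a *\<^sub>C a)"
    using assms(2) unfolding cvs.span_explicit by blast
  have "T x = (\<Sum>a\<in>G. c a *\<^sub>C T a)" using linop_sum[OF G(1)] G(2,3) assms(1) by blast
  also have "\<dots> \<in> cvs.span (T ` F)"
    by (intro cvs.span_sum cvs.span_scale cvs.span_base) (use G(2) in blast)
  finally show ?thesis .
qed

lemma linop_range_subspace: "cvs.subspace (T ` D)"
  unfolding cvs.subspace_def
proof (intro conjI ballI allI)
  show "0 \<in> T ` D" using linop_zero_in linop_zero by (metis imageI)
next
  fix x y assume "x \<in> T ` D" "y \<in> T ` D"
  then obtain a b where "a \<in> D" "b \<in> D" "x = T a" "y = T b" by blast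
  then show "x + y \<in> T ` D" by (intro image_eqI[of _ _ "a + b"]) (auto simp: linop_add linop_add_in)
next
  fix c x assume "x \<in> T ` D"
  then obtain a where "a \<in> D" "x = T a" by blast
  then show "c *\<^sub>C x \<in> T ` D" by (intro image_eqI[of _ _ "c *\<^sub>C a"]) (auto simp: linop_scale linop_scale_in)
qed

lemma linop_inj_iff_kernel: "inj_on T D \<longleftrightarrow> (\<forall>x\<in>D. T x = 0 \<longrightarrow> x = 0)"
proof
  assume "inj_on T D"
  then show "\<forall>x\<in>D. T x = 0 \<longrightarrow> x = 0" using linop_zero_in linop_zero by (metis inj_onD)
next
  assume kernel: "\<forall>x\<in>D. T x = 0 \<longrightarrow> x = 0"
  show "inj_on T D"
  proof (rule inj_onI)
    fix x y assume "x \<in> D" "y \<in> D" "T x = T y"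
    then have "T (x - y) = 0" by (simp add: linop_diff)
    then have "x - y = 0" using kernel linop_diff_in \<open>x \<in> D\<close> \<open>y \<in> D\<close> by blast
    then show "x = y" by simp
  qed
qed

end

lemma linear_op_shift: "linear_op D S \<Longrightarrow> linear_op D (shift S l)"
  unfolding linear_op_def shift_def
  by (auto simp: scaleC_add_right scaleC_diff_right scaleC_scaleC mult.commute)

lemma linear_op_prod:
  assumes "linear_op DA A" "linear_op DB B"
  shows "linear_op (prod_dom DB B DA) (A \<circ> B)"
  using assms linop_zero[OF assms(1)] linop_zero[OF assms(2)]
  unfolding linear_op_def csubspace_def prod_dom_def by auto

lemma shift_shift: "shift S l x = shift S m x + (m - l) *\<^sub>C x"
  unfolding shift_def by (simp add: scaleC_diff_left algebra_simps)

section \<open>The closed graph theorem\<close>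

text \<open>The closed graph theorem is proved for real-linear maps \<open>f\<close> defined on a closed
  subspace \<open>V\<close> of a Banach space (the graph-closed operators we apply it to are defined
  on closed ranges or on the whole space).  First, Baire's theorem applied to the
  closures of the level sets \<open>{y \<in> V. \<parallel>f y\<parallel> \<le> n}\<close>, which cover \<open>V\<close>, yields one with
  interior in \<open>V\<close>.\<close>

lemma baire_level_set_ball:
  fixes f :: "'a::banach \<Rightarrow> 'b::real_normed_vector" and V :: "'a set"
  assumes V: "closed V" "0 \<in> V"
  shows "\<exists>n::nat. \<exists>x0\<in>V. \<exists>r>0. \<forall>x\<in>V. dist x x0 < r \<longrightarrow> x \<in> closure {y\<in>V. norm (f y) \<le> real n}"
proof (rule ccontr)
  assume no_ball: "\<not> ?thesis"
  define L where "L n = V \<inter> closure {y\<in>V. norm (f y) \<le> real n}" for n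
  let ?X = "top_of_set V"
  have complete: "completely_metrizable_space ?X"
    by (rule completely_metrizable_space_closedin[OF completely_metrizable_space_euclidean])
       (use V closed_closedin in auto)
  have empty_interior: "?X interior_of L n = {}" for n
  proof (rule ccontr)
    assume "?X interior_of L n \<noteq> {}"
    then obtain x U where U: "openin ?X U" "x \<in> U" "U \<subseteq> L n"
      unfolding interior_of_def by auto
    then obtain e where e: "e > 0" "\<forall>x'\<in>V. dist x' x < e \<longrightarrow> x' \<in> U"
      unfolding openin_euclidean_subtopology_iff by meson
    have "x \<in> V" using U openin_euclidean_subtopology_iff by blast
    then show False using no_ball e U L_def by blast
  qed
  have "?X interior_of \<Union>(range L) = {}"
    by (rule Baire_category_alt)
       (use complete empty_interior in \<open>auto simp: L_def intro!: closedin_closed_Int\<close>)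
  moreover have "\<Union>(range L) = V"
  proof
    show "\<Union>(range L) \<subseteq> V" unfolding L_def by auto
    show "V \<subseteq> \<Union>(range L)"
    proof
      fix w assume "w \<in> V"
      have "norm (f w) \<le> real (nat \<lceil>norm (f w)\<rceil>)" by (rule real_nat_ceiling_ge)
      then have "w \<in> closure {y\<in>V. norm (f y) \<le> real (nat \<lceil>norm (f w)\<rceil>)}"
        using \<open>w \<in> V\<close> closure_subset by (metis (no_types, lifting) mem_Collect_eq subsetD)
      then have "w \<in> L (nat \<lceil>norm (f w)\<rceil>)" unfolding L_def using \<open>w \<in> V\<close> by blast
      then show "w \<in> \<Union>(range L)" by blast
    qed
  qed
  ultimately show False
    using V(2) by (metis empty_iff interior_of_topspace topspace_euclidean_subtopology)
qed

text \<open>By linearity the ball can be moved to the origin: some level set is dense in a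
  neighbourhood of \<open>0\<close> in \<open>V\<close>.\<close>

lemma linear_on_level_set_ball:
  fixes f :: "'a::banach \<Rightarrow> 'b::real_normed_vector" and V :: "'a set"
  assumes V: "closed V" "0 \<in> V" "\<And>x y. x\<in>V \<Longrightarrow> y\<in>V \<Longrightarrow> x+y \<in> V" "\<And>r x. x\<in>V \<Longrightarrow> r *\<^sub>R x \<in> V"
    and f: "\<And>x y. x\<in>V \<Longrightarrow> y\<in>V \<Longrightarrow> f(x+y) = f x + f y" "\<And>r x. x\<in>V \<Longrightarrow> f (r *\<^sub>R x) = r *\<^sub>R f x"
  obtains c r where "c \<ge> 0" "r > 0" "\<And>y. y \<in> V \<Longrightarrow> norm y < r \<Longrightarrow> y \<in> closure {z\<in>V. norm (f z) \<le> c}"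
proof -
  have diff_in: "x - y \<in> V" if "x \<in> V" "y \<in> V" for x y
    using V(3)[OF that(1) V(4)[OF that(2), of "-1"]] by simp
  have f_diff: "f (x - y) = f x - f y" if "x \<in> V" "y \<in> V" for x y
    using f(1)[OF that(1) V(4)[OF that(2), of "-1"]] f(2)[OF that(2), of "-1"] by simp
  obtain n :: nat and x0 r where x0: "x0 \<in> V" "r > 0"
    and ball: "\<And>x. x\<in>V \<Longrightarrow> dist x x0 < r \<Longrightarrow> x \<in> closure {y\<in>V. norm (f y) \<le> real n}"
    using baire_level_set_ball[OF V(1,2), of f] by blast
  have dense: "y \<in> closure {z\<in>V. norm (f z) \<le> 2 * real n}" if "y \<in> V" "norm y < r" for y
  proof (unfold closure_approachable, intro allI impI)
    fix \<epsilon> :: real assume "\<epsilon> > 0"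
    have "x0 + y \<in> closure {y\<in>V. norm (f y) \<le> real n}"
      using ball[of "x0 + y"] V(3)[OF x0(1) that(1)] that by (simp add: dist_norm)
    then obtain a where a: "a \<in> V" "norm (f a) \<le> real n" "dist a (x0 + y) < \<epsilon>/2"
      unfolding closure_approachable using \<open>\<epsilon> > 0\<close> by (metis (no_types, lifting) half_gt_zero mem_Collect_eq)
    have "x0 \<in> closure {y\<in>V. norm (f y) \<le> real n}"
      using ball[of x0] x0 by simp
    then obtain b where b: "b \<in> V" "norm (f b) \<le> real n" "dist b x0 < \<epsilon>/2"
      unfolding closure_approachable using \<open>\<epsilon> > 0\<close> by (metis (no_types, lifting) half_gt_zero mem_Collect_eq)
    have "a - b \<in> {z\<in>V. norm (f z) \<le> 2 * real n}"
      using diff_in[OF a(1) b(1)] f_diff[OF a(1) b(1)] a(2) b(2)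
      by (auto intro: order_trans[OF norm_triangle_ineq4])
    moreover have "dist (a - b) y < \<epsilon>"
    proof -
      have "dist (a - b) y = norm ((a - (x0 + y)) - (b - x0))" by (simp add: dist_norm algebra_simps)
      also have "\<dots> \<le> norm (a - (x0 + y)) + norm (b - x0)" by (rule norm_triangle_ineq4)
      also have "\<dots> < \<epsilon>" using a(3) b(3) by (simp add: dist_norm)
      finally show ?thesis .
    qed
    ultimately show "\<exists>z\<in>{z\<in>V. norm (f z) \<le> 2 * real n}. dist z y < \<epsilon>" by blast
  qed
  show thesis by (rule that[of "2 * real n" r, OF _ x0(2) dense]) auto
qed

text \<open>Rescaling gives the key estimate: every \<open>y \<in> V\<close> is approximated arbitrarily well by
  some \<open>z \<in> V\<close> with \<open>\<parallel>f z\<parallel> \<le> K \<parallel>y\<parallel>\<close>.\<close>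

lemma linear_on_approximation:
  fixes f :: "'a::banach \<Rightarrow> 'b::real_normed_vector" and V :: "'a set"
  assumes V: "closed V" "0 \<in> V" "\<And>x y. x\<in>V \<Longrightarrow> y\<in>V \<Longrightarrow> x+y \<in> V" "\<And>r x. x\<in>V \<Longrightarrow> r *\<^sub>R x \<in> V"
    and f: "\<And>x y. x\<in>V \<Longrightarrow> y\<in>V \<Longrightarrow> f(x+y) = f x + f y" "\<And>r x. x\<in>V \<Longrightarrow> f (r *\<^sub>R x) = r *\<^sub>R f x"
  obtains K where "K \<ge> 0"
    "\<And>y \<epsilon>. y \<in> V \<Longrightarrow> \<epsilon> > 0 \<Longrightarrow> \<exists>z\<in>V. norm (f z) \<le> K * norm y \<and> norm (y - z) < \<epsilon>"
proof -
  obtain c r where c: "c \<ge> 0" and r: "r > 0"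
    and ball: "\<And>y. y \<in> V \<Longrightarrow> norm y < r \<Longrightarrow> y \<in> closure {z\<in>V. norm (f z) \<le> c}"
    using linear_on_level_set_ball[OF V f] by blast
  define K where "K = 2 * c / r"
  have approx: "\<exists>z\<in>V. norm (f z) \<le> K * norm y \<and> norm (y - z) < \<epsilon>"
    if y: "y \<in> V" and \<epsilon>: "\<epsilon> > 0" for y \<epsilon>
  proof (cases "y = 0")
    case True
    then show ?thesis using V(2) f(2)[OF V(2), of 0] \<epsilon> by (intro bexI[of _ 0]) auto
  next
    case False
    define t where "t = r / (2 * norm y)"
    have t: "t > 0" using False r by (simp add: t_def)
    have "t *\<^sub>R y \<in> closure {z\<in>V. norm (f z) \<le> c}"
      using ball[of "t *\<^sub>R y"] V(4)[OF y] t r False by (simp add: t_def)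
    moreover have "\<epsilon> * t > 0" using t \<epsilon> by simp
    ultimately obtain z where z: "z \<in> V" "norm (f z) \<le> c" "dist z (t *\<^sub>R y) < \<epsilon> * t"
      unfolding closure_approachable by blast
    show ?thesis
    proof (intro bexI[of _ "(1/t) *\<^sub>R z"] conjI)
      show "(1/t) *\<^sub>R z \<in> V" using z(1) V(4) by blast
      have "norm (f ((1/t) *\<^sub>R z)) = (1/t) * norm (f z)" using f(2)[OF z(1)] t by simp
      also have "\<dots> \<le> (1/t) * c" using z(2) t by (intro mult_left_mono) auto
      also have "\<dots> = K * norm y" using False r unfolding t_def K_def by (simp add: field_simps)
      finally show "norm (f ((1/t) *\<^sub>R z)) \<le> K * norm y" .
      have "y - (1/t) *\<^sub>R z = (1/t) *\<^sub>R (t *\<^sub>R y - z)" using t by (simp add: algebra_simps)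
      then have "norm (y - (1/t) *\<^sub>R z) = (1/t) * dist z (t *\<^sub>R y)"
        using t by (simp add: dist_norm norm_minus_commute)
      also have "\<dots> < (1/t) * (\<epsilon> * t)" using z(3) t by (intro mult_strict_left_mono) auto
      also have "\<dots> = \<epsilon>" using t by simp
      finally show "norm (y - (1/t) *\<^sub>R z) < \<epsilon>" .
    qed
  qed
  have "K \<ge> 0" using c r by (simp add: K_def)
  then show thesis by (rule that[OF _ approx])
qed

text \<open>Iterating the approximation on the successive errors writes any \<open>x \<noteq> 0\<close> in \<open>V\<close> as a
  series \<open>\<Sum> z\<^sub>k\<close> whose images decay geometrically: \<open>\<parallel>f z\<^sub>k\<parallel> \<le> K \<parallel>x\<parallel> / 2\<^sup>k\<close>.\<close>

lemma approximation_series: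
  fixes f :: "'a::real_normed_vector \<Rightarrow> 'b::real_normed_vector"
  assumes diff_in: "\<And>x y. x \<in> V \<Longrightarrow> y \<in> V \<Longrightarrow> x - y \<in> V"
    and approx: "\<And>y \<epsilon>. y \<in> V \<Longrightarrow> \<epsilon> > 0 \<Longrightarrow> \<exists>z\<in>V. norm (f z) \<le> K * norm y \<and> norm (y - z) < \<epsilon>"
    and K: "K \<ge> 0" and x: "x \<in> V" "x \<noteq> 0"
  obtains z where "\<And>k. z k \<in> V" "\<And>k. norm (f (z k)) \<le> K * norm x * (1/2)^k"
    "(\<lambda>N. \<Sum>k<N. z k) \<longlonglongrightarrow> x"
proof -
  define g where
    "g y k = (SOME z. z \<in> V \<and> norm (f z) \<le> K * norm y \<and> norm (y - z) < norm x / 2^Suc k)" for y k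
  have g: "g y k \<in> V \<and> norm (f (g y k)) \<le> K * norm y \<and> norm (y - g y k) < norm x / 2^Suc k"
    if "y \<in> V" for y k
    unfolding g_def by (rule someI_ex) (use approx[OF that, of "norm x / 2^Suc k"] x(2) in auto)
  text \<open>\<open>e k\<close> is the error left after \<open>k\<close> approximation steps.\<close>
  define e where "e = rec_nat x (\<lambda>k ek. ek - g ek k)"
  have e0: "e 0 = x" and eSuc: "e (Suc k) = e k - g (e k) k" for k by (simp_all add: e_def)
  have e: "e k \<in> V \<and> norm (e k) \<le> norm x / 2^k" for k
  proof (induction k)
    case 0 then show ?case using e0 x(1) by simp
  next
    case (Suc k)
    then have "e k \<in> V" by blast
    then show ?case unfolding eSuc using g[of "e k" k] diff_in by fastforce
  qed
  define z where "z k = g (e k) k" for k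
  have zV: "z k \<in> V" for k unfolding z_def using g e by blast
  have fz: "norm (f (z k)) \<le> K * norm x * (1/2)^k" for k
  proof -
    have "norm (f (z k)) \<le> K * norm (e k)" unfolding z_def using g e by blast
    also have "\<dots> \<le> K * (norm x / 2^k)" using e K by (intro mult_left_mono) auto
    finally show ?thesis by (simp add: power_divide)
  qed
  have partial_sums: "(\<Sum>k<N. z k) = x - e N" for N
    by (induction N) (simp_all add: e0 eSuc z_def)
  have "e \<longlonglongrightarrow> 0"
  proof (rule tendsto_norm_zero_cancel, rule Lim_null_comparison)
    show "\<forall>\<^sub>F k in sequentially. norm (norm (e k)) \<le> norm x * (1/2)^k"
      using e by (simp add: power_divide)
    show "(\<lambda>k. norm x * (1/2::real)^k) \<longlonglongrightarrow> 0"
      by (intro tendsto_mult_right_zero LIMSEQ_power_zero) auto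
  qed
  then have "(\<lambda>N. \<Sum>k<N. z k) \<longlonglongrightarrow> x"
    unfolding partial_sums using tendsto_diff[of "\<lambda>_. x" x sequentially e 0] by simp
  then show thesis using that zV fz by blast
qed

text \<open>Summing the series of \<open>approximation_series\<close> in the graph
  shows \<open>f x = \<Sum> f z\<^sub>k\<close>, hence \<open>\<parallel>f x\<parallel> \<le> 2 K \<parallel>x\<parallel>\<close>.\<close>

lemma closed_graph_bounded:
  fixes f :: "'a::banach \<Rightarrow> 'b::banach" and V :: "'a set"
  assumes V: "closed V" "0 \<in> V" "\<And>x y. x\<in>V \<Longrightarrow> y\<in>V \<Longrightarrow> x+y \<in> V" "\<And>r x. x\<in>V \<Longrightarrow> r *\<^sub>R x \<in> V"
    and f: "\<And>x y. x\<in>V \<Longrightarrow> y\<in>V \<Longrightarrow> f(x+y) = f x + f y" "\<And>r x. x\<in>V \<Longrightarrow> f (r *\<^sub>R x) = r *\<^sub>R f x"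
    and graph: "closed ((\<lambda>x. (x, f x)) ` V)"
  shows "\<exists>C. \<forall>x\<in>V. norm (f x) \<le> C * norm x"
proof -
  have diff_in: "x - y \<in> V" if "x \<in> V" "y \<in> V" for x y
    using V(3)[OF that(1) V(4)[OF that(2), of "-1"]] by simp
  have f0: "f 0 = 0" using f(2)[OF V(2), of 0] by simp
  have f_sum: "(\<Sum>k<N. z k) \<in> V \<and> f (\<Sum>k<N. z k) = (\<Sum>k<N. f (z k))" if "\<And>k. z k \<in> V" for z and N :: nat
    by (induction N) (simp_all add: V(2,3) f(1) f0 that)
  obtain K where K: "K \<ge> 0"
    and approx: "\<And>y \<epsilon>. y \<in> V \<Longrightarrow> \<epsilon> > 0 \<Longrightarrow> \<exists>z\<in>V. norm (f z) \<le> K * norm y \<and> norm (y - z) < \<epsilon>"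
    using linear_on_approximation[OF V f] by blast
  have "norm (f x) \<le> 2 * K * norm x" if x: "x \<in> V" for x
  proof (cases "x = 0")
    case True then show ?thesis using f0 by simp
  next
    case False
    obtain z where zV: "\<And>k. z k \<in> V" and fz: "\<And>k. norm (f (z k)) \<le> K * norm x * (1/2)^k"
      and sums_x: "(\<lambda>N. \<Sum>k<N. z k) \<longlonglongrightarrow> x"
      using approximation_series[OF diff_in approx K x False] by blast
    have geometric: "summable (\<lambda>k. K * norm x * (1/2::real)^k)"
      by (intro summable_mult summable_geometric) auto
    have "summable (\<lambda>k. f (z k))" by (rule summable_comparison_test'[OF geometric fz])
    then have "(\<lambda>N. f (\<Sum>k<N. z k)) \<longlonglongrightarrow> (\<Sum>k. f (z k))"
      using summable_LIMSEQ f_sum[OF zV] by simp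
    then have graph_lim: "(\<lambda>N. ((\<Sum>k<N. z k), f (\<Sum>k<N. z k))) \<longlonglongrightarrow> (x, \<Sum>k. f (z k))"
      by (rule tendsto_Pair[OF sums_x])
    have in_graph: "((\<Sum>k<N. z k), f (\<Sum>k<N. z k)) \<in> (\<lambda>x. (x, f x)) ` V" for N
      by (rule image_eqI[of _ _ "\<Sum>k<N. z k"]) (use f_sum[OF zV] in auto)
    have "(x, \<Sum>k. f (z k)) \<in> (\<lambda>x. (x, f x)) ` V"
      by (rule closed_sequentially[OF graph in_graph graph_lim])
    then have "f x = (\<Sum>k. f (z k))" by auto
    also have "norm \<dots> \<le> (\<Sum>k. K * norm x * (1/2::real)^k)" by (rule norm_suminf_le[OF fz geometric])
    also have "\<dots> = 2 * K * norm x"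
      using suminf_geometric[of "1/2::real"] suminf_mult[of "\<lambda>k. (1/2::real)^k" "K * norm x"] by simp
    finally show ?thesis .
  qed
  then show ?thesis by blast
qed

context
  fixes D :: "'a::complex_banach set" and W :: "'a \<Rightarrow> 'b::complex_banach"
  assumes lin: "linear_op D W" and cl: "closed_op D W"
begin

text \<open>A closed operator that is bounded below is injective and has closed range: the
  preimages of a convergent sequence in the range form a Cauchy sequence.\<close>

lemma bounded_below_imp_closed_range:
  assumes c: "c > 0" "\<And>x. x \<in> D \<Longrightarrow> c * norm x \<le> norm (W x)"
  shows "inj_on W D \<and> closed (W ` D)"
proof
  show "inj_on W D"
    unfolding linop_inj_iff_kernel[OF lin] using c by (metis mult_le_0_iff norm_le_zero_iff not_less norm_zero)
  show "closed (W ` D)"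
  proof (unfold closed_sequential_limits, intro allI impI, elim conjE)
    fix y l assume y: "\<forall>n. y n \<in> W ` D" and lim: "y \<longlonglongrightarrow> l"
    define u where "u n = inv_into D W (y n)" for n
    have uD: "u n \<in> D" and Wu: "W (u n) = y n" for n
      using y by (auto simp: u_def inv_into_into f_inv_into_f)
    have "Cauchy u"
    proof (unfold Cauchy_def, intro allI impI)
      fix e :: real assume "e > 0"
      obtain M where M: "\<forall>m\<ge>M. \<forall>n\<ge>M. dist (y m) (y n) < e * c"
        using LIMSEQ_imp_Cauchy[OF lim] \<open>e > 0\<close> c(1) unfolding Cauchy_def by (meson mult_pos_pos)
      have "dist (u m) (u n) < e" if "m \<ge> M" "n \<ge> M" for m n
      proof -
        have "c * dist (u m) (u n) \<le> norm (W (u m - u n))"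
          using c(2)[OF linop_diff_in[OF lin uD uD]] by (simp add: dist_norm)
        also have "\<dots> = dist (y m) (y n)" using linop_diff[OF lin uD uD] Wu by (simp add: dist_norm)
        also have "\<dots> < e * c" using M that by blast
        finally show ?thesis using c(1) by (simp add: mult.commute)
      qed
      then show "\<exists>M. \<forall>m\<ge>M. \<forall>n\<ge>M. dist (u m) (u n) < e" by blast
    qed
    then obtain x where "u \<longlonglongrightarrow> x" using convergent_eq_Cauchy by blast
    then have graph_lim: "(\<lambda>n. (u n, W (u n))) \<longlonglongrightarrow> (x, l)" unfolding Wu by (rule tendsto_Pair[OF _ lim])
    have graph: "closed ((\<lambda>x. (x, W x)) ` D)" using cl unfolding closed_op_def .
    have "(x, l) \<in> (\<lambda>x. (x, W x)) ` D"
      by (rule closed_sequentially[OF graph _ graph_lim]) (use uD in blast)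
    then show "l \<in> W ` D" by auto
  qed
qed

text \<open>Conversely (bounded inverse theorem), an injective closed operator with closed range
  is bounded below: its inverse is a linear map on the closed subspace \<open>ran W\<close> whose graph
  is the mirrored graph of \<open>W\<close>, so the closed graph theorem applies.\<close>

lemma closed_range_imp_bounded_below:
  assumes inj: "inj_on W D" and closed_range: "closed (W ` D)"
  shows "\<exists>c>0. \<forall>x\<in>D. c * norm x \<le> norm (W x)"
proof -
  define f where "f = inv_into D W"
  have f_W: "f (W x) = x" if "x \<in> D" for x using inj that by (simp add: f_def)
  have "\<exists>C. \<forall>y\<in>W ` D. norm (f y) \<le> C * norm y"
  proof (rule closed_graph_bounded[OF closed_range])
    show "0 \<in> W ` D" using linop_zero_in[OF lin] linop_zero[OF lin] by force
    show "y1 + y2 \<in> W ` D" and "f (y1 + y2) = f y1 + f y2"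
      if y: "y1 \<in> W ` D" "y2 \<in> W ` D" for y1 y2
    proof -
      obtain x1 x2 where x: "x1 \<in> D" "x2 \<in> D" "y1 = W x1" "y2 = W x2" using y by blast
      then have "y1 + y2 = W (x1 + x2)" using linop_add[OF lin] by simp
      then show "y1 + y2 \<in> W ` D" and "f (y1 + y2) = f y1 + f y2"
        using x f_W linop_add_in[OF lin x(1,2)] by auto
    qed
    show "r *\<^sub>R y \<in> W ` D" and "f (r *\<^sub>R y) = r *\<^sub>R f y" if y: "y \<in> W ` D" for r y
    proof -
      obtain x where x: "x \<in> D" "y = W x" using y by blast
      then have "r *\<^sub>R y = W (r *\<^sub>R x)" using linop_scaleR[OF lin] by simp
      then show "r *\<^sub>R y \<in> W ` D" and "f (r *\<^sub>R y) = r *\<^sub>R f y"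
        using x f_W linop_scaleR_in[OF lin x(1)] by auto
    qed
    have "(\<lambda>y. (y, f y)) ` (W ` D) = (\<lambda>p. (snd p, fst p)) -` ((\<lambda>x. (x, W x)) ` D)"
      using f_W by force
    moreover have "closed ((\<lambda>p. (snd p, fst p)) -` ((\<lambda>x. (x, W x)) ` D))"
      using cl unfolding closed_op_def by (rule closed_vimage) (intro continuous_intros)
    ultimately show "closed ((\<lambda>y. (y, f y)) ` (W ` D))" by simp
  qed
  then obtain C where C: "\<And>x. x \<in> D \<Longrightarrow> norm x \<le> C * norm (W x)" using f_W by force
  show ?thesis
  proof (intro exI[of _ "1 / (\<bar>C\<bar> + 1)"] conjI ballI)
    fix x assume "x \<in> D"
    have "norm x \<le> (\<bar>C\<bar> + 1) * norm (W x)"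
      using C[OF \<open>x \<in> D\<close>] by (smt (verit, best) mult_right_mono norm_ge_zero)
    then show "1 / (\<bar>C\<bar> + 1) * norm x \<le> norm (W x)" by (simp add: field_simps)
  qed simp
qed

end

text \<open>A closed operator \<open>C\<close> composed with a bounded linear map \<open>P\<close> into its domain is bounded:
  the graph of \<open>C \<circ> P\<close> is a continuous preimage of the graph of \<open>C\<close>.\<close>

lemma closed_op_comp_bounded:
  fixes C :: "'y::complex_banach \<Rightarrow> 'z::complex_banach" and P :: "'x::complex_banach \<Rightarrow> 'y"
  assumes linC: "linear_op DC C" and clC: "closed_op DC C"
    and P: "bounded_linear P" and PD: "\<And>x. P x \<in> DC"
  shows "bounded_linear (\<lambda>x. C (P x))"
proof -
  have add: "C (P (x + y)) = C (P x) + C (P y)" for x y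
    using linop_add[OF linC PD PD] linear_add[OF bounded_linear.linear[OF P]] by simp
  have scale: "C (P (r *\<^sub>R x)) = r *\<^sub>R C (P x)" for r x
    using linop_scaleR[OF linC PD] linear_scale[OF bounded_linear.linear[OF P]] by simp
  have "\<exists>K. \<forall>x\<in>UNIV. norm (C (P x)) \<le> K * norm x"
  proof (rule closed_graph_bounded)
    have "(\<lambda>x. (x, C (P x))) ` UNIV = (\<lambda>p. (P (fst p), snd p)) -` ((\<lambda>x. (x, C x)) ` DC)"
      using PD by auto
    moreover have "closed ((\<lambda>p. (P (fst p), snd p)) -` ((\<lambda>x. (x, C x)) ` DC))"
      using clC unfolding closed_op_def
      by (rule closed_vimage) (intro continuous_intros bounded_linear.continuous_on[OF P])
    ultimately show "closed ((\<lambda>x. (x, C (P x))) ` UNIV)" by simp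
  qed (use add scale in auto)
  then obtain K where K: "\<And>x. norm (C (P x)) \<le> K * norm x" by blast
  show ?thesis
    by (rule bounded_linear_intro[of _ K]) (use add scale K in \<open>auto simp: mult.commute\<close>)
qed

lemma ap_spectrumI:
  assumes lin: "linear_op D S"
    and small: "\<And>n::nat. \<exists>x\<in>D. norm (shift S l x) < norm x / real (Suc n)"
  shows "l \<in> ap_spectrum D S"
proof -
  have lin_shift: "linear_op D (shift S l)" by (rule linear_op_shift[OF lin])
  obtain u where u: "\<And>n. u n \<in> D" "\<And>n. norm (shift S l (u n)) < norm (u n) / real (Suc n)"
    using small by metis
  have u_nonzero: "u n \<noteq> 0" for n using u(2)[of n] by auto
  define x where "x n = (1 / norm (u n)) *\<^sub>R u n" for n
  have x: "x n \<in> D \<and> norm (x n) = 1" for n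
    using linop_scaleR_in[OF lin_shift] u u_nonzero by (simp add: x_def)
  have x_small: "norm (shift S l (x n)) \<le> 1 / real (Suc n)" for n
  proof -
    have "norm (shift S l (x n)) = norm (shift S l (u n)) / norm (u n)"
      unfolding x_def using linop_scaleR[OF lin_shift] u by simp
    also have "\<dots> < 1 / real (Suc n)" using u(2)[of n] u_nonzero by (simp add: divide_simps)
    finally show ?thesis by simp
  qed
  have "(\<lambda>n. shift S l (x n)) \<longlonglongrightarrow> 0"
  proof (rule tendsto_norm_zero_cancel, rule Lim_null_comparison)
    show "\<forall>\<^sub>F n in sequentially. norm (norm (shift S l (x n))) \<le> 1 / real (Suc n)"
      using x_small by simp
    show "(\<lambda>n. 1 / real (Suc n)) \<longlonglongrightarrow> 0"
      using LIMSEQ_inverse_real_of_nat by (simp add: inverse_eq_divide)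
  qed
  then show ?thesis unfolding ap_spectrum_def using x by blast
qed

lemma not_ap_spectrum_iff_bounded_below:
  assumes lin: "linear_op D S"
  shows "l \<notin> ap_spectrum D S \<longleftrightarrow> (\<exists>c>0. \<forall>x\<in>D. c * norm x \<le> norm (shift S l x))"
proof
  assume "\<exists>c>0. \<forall>x\<in>D. c * norm x \<le> norm (shift S l x)"
  then obtain c where c: "c > 0" "\<And>x. x\<in>D \<Longrightarrow> c * norm x \<le> norm (shift S l x)" by blast
  show "l \<notin> ap_spectrum D S"
  proof
    assume "l \<in> ap_spectrum D S"
    then obtain x where x: "\<And>n. x n \<in> D \<and> norm (x n) = 1" "(\<lambda>n. shift S l (x n)) \<longlonglongrightarrow> 0"
      unfolding ap_spectrum_def by blast
    have "\<forall>\<^sub>F n in sequentially. norm (shift S l (x n)) < c"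
      using x(2) c(1) unfolding tendsto_iff by (simp add: dist_norm)
    then obtain n where "norm (shift S l (x n)) < c" using eventually_sequentially by auto
    moreover have "c \<le> norm (shift S l (x n))" using c(2)[of "x n"] x(1)[of n] by simp
    ultimately show False by simp
  qed
next
  assume "l \<notin> ap_spectrum D S"
  then have "\<not> (\<forall>n::nat. \<exists>x\<in>D. norm (shift S l x) < norm x / real (Suc n))"
    using ap_spectrumI[OF lin] by blast
  then obtain n :: nat where "\<forall>x\<in>D. norm x / real (Suc n) \<le> norm (shift S l x)" by (auto simp: not_less)
  then show "\<exists>c>0. \<forall>x\<in>D. c * norm x \<le> norm (shift S l x)"
    by (intro exI[of _ "1 / real (Suc n)"]) auto
qed

lemma not_ap_spectrum_iff:
  assumes lin: "linear_op D S" and cl: "closed_op D (shift S l)"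
  shows "l \<notin> ap_spectrum D S \<longleftrightarrow> inj_on (shift S l) D \<and> closed (op_range D (shift S l))"
  unfolding not_ap_spectrum_iff_bounded_below[OF lin] op_range_def
  using bounded_below_imp_closed_range[OF linear_op_shift[OF lin] cl]
    closed_range_imp_bounded_below[OF linear_op_shift[OF lin] cl] by blast

lemma resolvent_set_iff_bij:
  assumes lin: "linear_op D S" and cl: "closed_op D (shift S l)"
  shows "l \<in> resolvent_set D S \<longleftrightarrow> bij_betw (shift S l) D UNIV"
proof
  assume "l \<in> resolvent_set D S"
  then show "bij_betw (shift S l) D UNIV" unfolding resolvent_set_def by blast
next
  assume bij: "bij_betw (shift S l) D UNIV"
  then obtain c where c: "c > 0" "\<forall>x\<in>D. c * norm x \<le> norm (shift S l x)"
    using closed_range_imp_bounded_below[OF linear_op_shift[OF lin] cl] by (auto simp: bij_betw_def)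
  have "norm (inv_into D (shift S l) z) \<le> (1/c) * norm z" for z
  proof -
    have "inv_into D (shift S l) z \<in> D" using bij by (metis bij_betw_imp_surj_on inv_into_into UNIV_I)
    then have "c * norm (inv_into D (shift S l) z) \<le> norm z"
      using c(2) bij_betw_inv_into_right[OF bij] by force
    then show ?thesis using c(1) by (simp add: field_simps mult.commute)
  qed
  then show "l \<in> resolvent_set D S" unfolding resolvent_set_def using bij by blast
qed

section \<open>The resolvent at a point of the resolvent set\<close>

locale resolvent_point =
  fixes D :: "'a::complex_banach set" and S :: "'a \<Rightarrow> 'a" and \<mu> :: complex
  assumes lin: "linear_op D S" and resolvent: "\<mu> \<in> resolvent_set D S"
begin

definition R :: "'a \<Rightarrow> 'a" where "R = inv_into D (shift S \<mu>)"

lemma bij_shift: "bij_betw (shift S \<mu>) D UNIV"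
  using resolvent unfolding resolvent_set_def by blast

lemma R_in_dom: "R x \<in> D"
  unfolding R_def using bij_shift by (metis bij_betw_def inv_into_into UNIV_I)

lemma shift_R: "shift S \<mu> (R x) = x"
  unfolding R_def using bij_betw_inv_into_right[OF bij_shift] by simp

lemma R_shift: "p \<in> D \<Longrightarrow> R (shift S \<mu> p) = p"
  unfolding R_def using bij_shift by (simp add: bij_betw_def)

lemma linear_shift: "linear_op D (shift S l)"
  by (rule linear_op_shift[OF lin])

lemma R_add: "R (x + y) = R x + R y"
proof -
  have "R (x + y) = R (shift S \<mu> (R x + R y))"
    using linop_add[OF linear_shift R_in_dom R_in_dom] by (simp add: shift_R)
  also have "\<dots> = R x + R y" using R_shift linop_add_in[OF linear_shift R_in_dom R_in_dom] by simp
  finally show ?thesis .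
qed

lemma R_scale: "R (c *\<^sub>C x) = c *\<^sub>C R x"
proof -
  have "R (c *\<^sub>C x) = R (shift S \<mu> (c *\<^sub>C R x))"
    using linop_scale[OF linear_shift R_in_dom] by (simp add: shift_R)
  also have "\<dots> = c *\<^sub>C R x" using R_shift linop_scale_in[OF linear_shift R_in_dom] by simp
  finally show ?thesis .
qed

lemma bounded_linear_R: "bounded_linear R"
proof -
  obtain C where C: "\<And>z. norm (R z) \<le> C * norm z"
    using resolvent unfolding resolvent_set_def R_def by blast
  show ?thesis
    by (rule bounded_linear_intro[of _ C]) (auto simp: R_add scaleR_scaleC R_scale C mult.commute)
qed

lemma continuous_R: "continuous_on UNIV R"
  using bounded_linear.continuous_on[OF bounded_linear_R continuous_on_id] by simp

text \<open>Every \<open>S - l\<close> is closed: its graph is the preimage of the graph of the bounded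
  operator \<open>R\<close> (read backwards) under a homeomorphism of \<open>X \<times> X\<close>.\<close>

lemma closed_op_shift: "closed_op D (shift S l)"
proof -
  have graph_mu: "(\<lambda>x. (x, shift S \<mu> x)) ` D = {p. fst p = R (snd p)}"
  proof (intro set_eqI iffI)
    fix p assume "p \<in> {p. fst p = R (snd p)}"
    then have "p = (R (snd p), shift S \<mu> (R (snd p)))" by (cases p) (simp add: shift_R)
    then show "p \<in> (\<lambda>x. (x, shift S \<mu> x)) ` D" using R_in_dom by (intro image_eqI[of _ _ "R (snd p)"]) auto
  qed (use R_shift in auto)
  have "(\<lambda>x. (x, shift S l x)) ` D = (\<lambda>p. (fst p, snd p + (l - \<mu>) *\<^sub>C fst p)) -` {p. fst p = R (snd p)}"
  proof (intro set_eqI iffI)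
    fix p assume "p \<in> (\<lambda>p. (fst p, snd p + (l - \<mu>) *\<^sub>C fst p)) -` {p. fst p = R (snd p)}"
    then have p: "fst p = R (snd p + (l - \<mu>) *\<^sub>C fst p)" by simp
    then have "shift S \<mu> (fst p) = snd p + (l - \<mu>) *\<^sub>C fst p" by (metis shift_R)
    then have "snd p = shift S l (fst p)" using shift_shift[of S \<mu> "fst p" l] by (simp add: algebra_simps)
    moreover have "fst p \<in> D" using p R_in_dom by metis
    ultimately show "p \<in> (\<lambda>x. (x, shift S l x)) ` D"
      by (intro image_eqI[of _ _ "fst p"]) (auto simp: prod_eq_iff)
  qed (use R_shift shift_shift[of S \<mu> _ l] in auto)
  moreover have "closed ((\<lambda>p. (fst p, snd p + (l - \<mu>) *\<^sub>C fst p)) -` {p::'a\<times>'a. fst p = R (snd p)})"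
    by (intro closed_vimage closed_Collect_eq continuous_intros)
       (auto intro!: continuous_on_compose2[OF continuous_R] continuous_intros)
  ultimately show ?thesis unfolding closed_op_def by simp
qed

lemma R_shift_commute: "p \<in> D \<Longrightarrow> R (shift S l p) = shift S l (R p)"
proof -
  assume p: "p \<in> D"
  have "R (shift S l p) = R (shift S \<mu> p + (\<mu> - l) *\<^sub>C p)" by (simp add: shift_shift[of S l p \<mu>])
  also have "\<dots> = p + (\<mu> - l) *\<^sub>C R p" by (simp add: R_add R_scale R_shift p)
  also have "\<dots> = shift S l (R p)" by (simp add: shift_shift[of S l "R p" \<mu>] shift_R)
  finally show ?thesis .
qed

lemma S_R_in_dom: "p \<in> D \<Longrightarrow> S (R p) \<in> D"
proof -
  assume p: "p \<in> D"
  have "S (R p) = shift S \<mu> (R p) + \<mu> *\<^sub>C R p" unfolding shift_def by simp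
  also have "\<dots> = p + \<mu> *\<^sub>C R p" by (simp add: shift_R)
  finally show ?thesis using p linop_add_in[OF lin] linop_scale_in[OF lin] R_in_dom by simp
qed

lemma resolvent_decomposition:
  "x = shift S l (R x + (l - \<mu>) *\<^sub>C R (R x)) + (l - \<mu>)^2 *\<^sub>C R (R x)"
proof -
  have shift_l_R: "shift S l (R y) = y + (\<mu> - l) *\<^sub>C R y" for y
    by (simp add: shift_shift[of S l "R y" \<mu>] shift_R)
  have "shift S l (R x + (l - \<mu>) *\<^sub>C R (R x)) = shift S l (R x) + (l - \<mu>) *\<^sub>C shift S l (R (R x))"
    using linop_add[OF linear_shift R_in_dom linop_scale_in[OF lin R_in_dom]]
      linop_scale[OF linear_shift R_in_dom] by simp
  also have "\<dots> = x + (\<mu> - l) *\<^sub>C R x + (l - \<mu>) *\<^sub>C (R x + (\<mu> - l) *\<^sub>C R (R x))"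
    by (simp add: shift_l_R)
  also have "\<dots> = x + ((\<mu> - l) *\<^sub>C R x + (l - \<mu>) *\<^sub>C R x) + ((l - \<mu>) * (\<mu> - l)) *\<^sub>C R (R x)"
    by (simp add: scaleC_add_right scaleC_scaleC add.assoc)
  also have "(\<mu> - l) *\<^sub>C R x + (l - \<mu>) *\<^sub>C R x = 0" by (simp flip: scaleC_add_left)
  also have "(l - \<mu>) * (\<mu> - l) = - ((l - \<mu>)^2)" by (simp add: power2_eq_square algebra_simps)
  also have "x + 0 + (- ((l - \<mu>)^2)) *\<^sub>C R (R x) = x - (l - \<mu>)^2 *\<^sub>C R (R x)"
    by (simp add: scaleC_minus_left)
  finally show ?thesis by simp
qed

end

section \<open>From \<open>AB - \<lambda>\<close> to \<open>BA - \<lambda>\<close>\<close>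

text \<open>Each property of \<open>AB - \<lambda>\<close> (\<open>\<lambda> \<noteq> 0\<close>) considered in the
  theorem is shown to pass to \<open>BA - \<lambda>\<close>; the converse follows by exchanging \<open>A\<close> and \<open>B\<close>.\<close>

locale operator_pair =
  fixes DA :: "'x::complex_banach set" and A :: "'x \<Rightarrow> 'y::complex_banach"
    and DB :: "'y set" and B :: "'y \<Rightarrow> 'x" and \<mu> \<nu> :: complex
  assumes linA: "linear_op DA A" and clA: "closed_op DA A"
    and linB: "linear_op DB B" and clB: "closed_op DB B"
    and resolvent_AB: "\<mu> \<in> resolvent_set (prod_dom DB B DA) (A \<circ> B)"
    and resolvent_BA: "\<nu> \<in> resolvent_set (prod_dom DA A DB) (B \<circ> A)"
begin

sublocale AB: resolvent_point "prod_dom DB B DA" "A \<circ> B" \<mu>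
  by unfold_locales (use linear_op_prod[OF linA linB] resolvent_AB in auto)

sublocale BA: resolvent_point "prod_dom DA A DB" "B \<circ> A" \<nu>
  by unfold_locales (use linear_op_prod[OF linB linA] resolvent_BA in auto)

abbreviation "dom_AB \<equiv> prod_dom DB B DA"
abbreviation "dom_BA \<equiv> prod_dom DA A DB"

lemma dom_AB_iff: "u \<in> dom_AB \<longleftrightarrow> u \<in> DB \<and> B u \<in> DA"
  unfolding prod_dom_def by simp

lemma dom_BA_iff: "q \<in> dom_BA \<longleftrightarrow> q \<in> DA \<and> A q \<in> DB"
  unfolding prod_dom_def by simp

lemma A_intertwines:
  assumes q: "q \<in> dom_BA" and BAq: "B (A q) \<in> DA"
  shows "A q \<in> dom_AB \<and> A (shift (B \<circ> A) l q) = shift (A \<circ> B) l (A q)"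
proof
  show "A q \<in> dom_AB" using q BAq dom_AB_iff dom_BA_iff by blast
  have "q \<in> DA" using q dom_BA_iff by blast
  then show "A (shift (B \<circ> A) l q) = shift (A \<circ> B) l (A q)"
    unfolding shift_def using linop_diff[OF linA BAq linop_scale_in[OF linA]] linop_scale[OF linA] by simp
qed

lemma B_intertwines:
  assumes u: "u \<in> dom_AB" and ABu: "A (B u) \<in> DB"
  shows "B u \<in> dom_BA \<and> B (shift (A \<circ> B) l u) = shift (B \<circ> A) l (B u)"
proof
  show "B u \<in> dom_BA" using u ABu dom_AB_iff dom_BA_iff by blast
  have "u \<in> DB" using u dom_AB_iff by blast
  then show "B (shift (A \<circ> B) l u) = shift (B \<circ> A) l (B u)"
    unfolding shift_def using linop_diff[OF linB ABu linop_scale_in[OF linB]] linop_scale[OF linB] by simp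
qed

lemma kernel_lift:
  assumes l: "l \<noteq> 0" and x: "x \<in> dom_BA" and kernel: "shift (B \<circ> A) l x = 0"
  shows "(1/l) *\<^sub>C A x \<in> dom_AB \<and> shift (A \<circ> B) l ((1/l) *\<^sub>C A x) = 0 \<and> B ((1/l) *\<^sub>C A x) = x"
proof -
  have BA: "B (A x) = l *\<^sub>C x" using kernel unfolding shift_def by simp
  have xA: "x \<in> DA" and AxB: "A x \<in> DB" using x dom_BA_iff by auto
  have "A x \<in> dom_AB" using AxB BA linop_scale_in[OF linA xA] dom_AB_iff by simp
  then have lift_in: "(1/l) *\<^sub>C A x \<in> dom_AB" using linop_scale_in[OF AB.lin] by blast
  have B_lift: "B ((1/l) *\<^sub>C A x) = x"
    using linop_scale[OF linB AxB] BA l by (simp add: scaleC_scaleC scaleC_one)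
  have "shift (A \<circ> B) l ((1/l) *\<^sub>C A x) = A x - l *\<^sub>C ((1/l) *\<^sub>C A x)"
    unfolding shift_def using B_lift by simp
  also have "\<dots> = 0" using l by (simp add: scaleC_scaleC scaleC_one)
  finally show ?thesis using lift_in B_lift by blast
qed

lemma inj_transfer:
  assumes l: "l \<noteq> 0" and inj: "inj_on (shift (A \<circ> B) l) dom_AB"
  shows "inj_on (shift (B \<circ> A) l) dom_BA"
  unfolding linop_inj_iff_kernel[OF BA.linear_shift]
proof (intro ballI impI)
  fix x assume x: "x \<in> dom_BA" and kernel: "shift (B \<circ> A) l x = 0"
  note lift = kernel_lift[OF l x kernel]
  then have "(1/l) *\<^sub>C A x = 0" using inj unfolding linop_inj_iff_kernel[OF AB.linear_shift] by blast
  then show "x = 0" using lift linop_zero[OF linB] by metis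
qed

text \<open>\<open>B\<close> maps a (finite) basis of \<open>ker(AB - l)\<close> onto a spanning set of \<open>ker(BA - l)\<close>.\<close>

lemma finite_dimensional_kernel_transfer:
  assumes l: "l \<noteq> 0" and fd: "finite_dimensional (op_kernel dom_AB (shift (A \<circ> B) l))"
  shows "finite_dimensional (op_kernel dom_BA (shift (B \<circ> A) l))"
proof -
  let ?K = "op_kernel dom_AB (shift (A \<circ> B) l)"
  obtain F where F: "finite F" "?K \<subseteq> cvs.span F" using fd unfolding finite_dimensional_iff_span by blast
  obtain G where G: "G \<subseteq> ?K" "cvs.independent G" "?K \<subseteq> cvs.span G"
    by (metis cvs.basis_exists)
  have "finite G" using cvs.independent_span_bound[OF F(1) G(2)] G(1) F(2) by blast
  moreover have "op_kernel dom_BA (shift (B \<circ> A) l) \<subseteq> cvs.span (B ` G)"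
  proof
    fix x assume "x \<in> op_kernel dom_BA (shift (B \<circ> A) l)"
    then have x: "x \<in> dom_BA" "shift (B \<circ> A) l x = 0" unfolding op_kernel_def by auto
    note lift = kernel_lift[OF l x]
    have "(1/l) *\<^sub>C A x \<in> cvs.span G" using lift G(3) unfolding op_kernel_def by auto
    moreover have "G \<subseteq> DB" using G(1) unfolding op_kernel_def prod_dom_def by auto
    ultimately show "x \<in> cvs.span (B ` G)" using linop_span[OF linB] lift by metis
  qed
  ultimately show ?thesis unfolding finite_dimensional_iff_span by blast
qed

text \<open>The bounded operators \<open>P = B (AB - \<mu>)\<^sup>-\<^sup>1\<close> and \<open>M = A (BA - \<nu>)\<^sup>-\<^sup>1\<close> (closed operators
  composed with bounded operators into their domains).\<close>

definition P :: "'y \<Rightarrow> 'x" where "P y = B (AB.R y)"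
definition M :: "'x \<Rightarrow> 'y" where "M x = A (BA.R x)"

lemma AB_R_in_DB: "AB.R y \<in> DB"
  using AB.R_in_dom dom_AB_iff by blast

lemma BA_R_in_DA: "BA.R x \<in> DA"
  using BA.R_in_dom dom_BA_iff by blast

lemma continuous_P: "continuous_on UNIV P"
  unfolding P_def
  using closed_op_comp_bounded[OF linB clB AB.bounded_linear_R AB_R_in_DB]
  by (simp add: linear_continuous_on)

lemma continuous_M: "continuous_on UNIV M"
  unfolding M_def
  using closed_op_comp_bounded[OF linA clA BA.bounded_linear_R BA_R_in_DA]
  by (simp add: linear_continuous_on)

lemma linear_op_P: "linear_op UNIV P"
  unfolding linear_op_def csubspace_def P_def
  using linop_add[OF linB AB_R_in_DB AB_R_in_DB] linop_scale[OF linB AB_R_in_DB]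
  by (simp add: AB.R_add AB.R_scale)

lemma P_shift: "u \<in> dom_AB \<Longrightarrow> P (shift (A \<circ> B) l u) = shift (B \<circ> A) l (B (AB.R u)) \<and> B (AB.R u) \<in> dom_BA"
  unfolding P_def AB.R_shift_commute
  using B_intertwines[OF AB.R_in_dom] AB.S_R_in_dom dom_AB_iff by simp

lemma M_shift: "p \<in> dom_BA \<Longrightarrow> M (shift (B \<circ> A) l p) = shift (A \<circ> B) l (A (BA.R p)) \<and> A (BA.R p) \<in> dom_AB"
  unfolding M_def BA.R_shift_commute
  using A_intertwines[OF BA.R_in_dom] BA.S_R_in_dom dom_BA_iff by simp

lemma P_maps_range: "P ` (shift (A \<circ> B) l ` dom_AB) \<subseteq> shift (B \<circ> A) l ` dom_BA"
  using P_shift by blast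

lemma M_maps_range: "M ` (shift (B \<circ> A) l ` dom_BA) \<subseteq> shift (A \<circ> B) l ` dom_AB"
  using M_shift by blast

lemma R_maps_range: "BA.R ` (shift (B \<circ> A) l ` dom_BA) \<subseteq> shift (B \<circ> A) l ` dom_BA"
  using BA.R_shift_commute BA.R_in_dom by blast

lemma range_subspace: "cvs.subspace (shift (B \<circ> A) l ` dom_BA)"
  by (rule linop_range_subspace[OF BA.linear_shift])

lemma range_decomposition:
  assumes l: "l \<noteq> 0"
  shows "\<exists>p\<in>dom_BA. x = shift (B \<circ> A) l p + ((l - \<nu>)^2 / l) *\<^sub>C B (A (BA.R (BA.R x)))"
proof -
  define z where "z = BA.R (BA.R x)"
  define p0 where "p0 = BA.R x + (l - \<nu>) *\<^sub>C BA.R (BA.R x)"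
  define c where "c = (l - \<nu>)^2"
  have z: "z \<in> dom_BA" unfolding z_def by (rule BA.R_in_dom)
  have p0: "p0 \<in> dom_BA"
    unfolding p0_def using linop_add_in[OF BA.lin BA.R_in_dom linop_scale_in[OF BA.lin BA.R_in_dom]] .
  have "x = shift (B \<circ> A) l p0 + c *\<^sub>C z"
    unfolding p0_def z_def c_def by (rule BA.resolvent_decomposition)
  also have "z = (1/l) *\<^sub>C B (A z) - (1/l) *\<^sub>C shift (B \<circ> A) l z"
    unfolding shift_def using l by (simp add: scaleC_diff_right scaleC_scaleC scaleC_one)
  also have "shift (B \<circ> A) l p0 + c *\<^sub>C \<dots> = shift (B \<circ> A) l p0 - (c / l) *\<^sub>C shift (B \<circ> A) l z + (c / l) *\<^sub>C B (A z)"
    by (simp add: scaleC_diff_right scaleC_scaleC algebra_simps)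
  also have "shift (B \<circ> A) l p0 - (c / l) *\<^sub>C shift (B \<circ> A) l z = shift (B \<circ> A) l (p0 - (c / l) *\<^sub>C z)"
    using linop_diff[OF BA.linear_shift p0 linop_scale_in[OF BA.lin z]] linop_scale[OF BA.linear_shift z] by simp
  finally have "x = shift (B \<circ> A) l (p0 - (c / l) *\<^sub>C z) + (c / l) *\<^sub>C B (A z)" .
  moreover have "p0 - (c / l) *\<^sub>C z \<in> dom_BA" using linop_diff_in[OF BA.lin p0 linop_scale_in[OF BA.lin z]] .
  ultimately show ?thesis unfolding c_def z_def by blast
qed

lemma BA_R2_eq_P: "B (A (BA.R (BA.R x))) = P (shift (A \<circ> B) \<mu> (A (BA.R (BA.R x))))"
proof -
  have "A (BA.R (BA.R x)) \<in> dom_AB" using M_shift[OF BA.R_in_dom, of \<mu>] unfolding M_def by blast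
  then show ?thesis unfolding P_def using AB.R_shift by simp
qed

lemma closed_range_transfer:
  assumes l: "l \<noteq> 0" and closed_AB: "closed (op_range dom_AB (shift (A \<circ> B) l))"
  shows "closed (op_range dom_BA (shift (B \<circ> A) l))"
proof -
  let ?ran_BA = "shift (B \<circ> A) l ` dom_BA" and ?ran_AB = "shift (A \<circ> B) l ` dom_AB"
  have "closure ?ran_BA \<subseteq> ?ran_BA"
  proof
    fix x assume x: "x \<in> closure ?ran_BA"
    have "BA.R ` closure ?ran_BA \<subseteq> closure ?ran_BA"
      by (rule image_closure_into_closure[OF BA.continuous_R]) (use R_maps_range closure_subset in blast)
    then have "BA.R x \<in> closure ?ran_BA" using x by blast
    moreover have "M ` closure ?ran_BA \<subseteq> closure ?ran_AB"
      by (rule image_closure_into_closure[OF continuous_M]) (use M_maps_range closure_subset in blast)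
    ultimately have "M (BA.R x) \<in> closure ?ran_AB" by blast
    then have "M (BA.R x) \<in> ?ran_AB" using closed_AB unfolding op_range_def by (simp add: closure_closed)
    then obtain u where u: "u \<in> dom_AB" "A (BA.R (BA.R x)) = shift (A \<circ> B) l u" unfolding M_def by blast
    have "A (BA.R (BA.R x)) \<in> dom_AB" using M_shift[OF BA.R_in_dom, of l] unfolding M_def by blast
    then have "A (BA.R (BA.R x)) + l *\<^sub>C u \<in> DB"
      using u(1) dom_AB_iff linop_add_in[OF linB] linop_scale_in[OF linB] by blast
    moreover have "A (B u) = A (BA.R (BA.R x)) + l *\<^sub>C u" using u(2) unfolding shift_def by simp
    ultimately have r: "B (A (BA.R (BA.R x))) \<in> ?ran_BA" using B_intertwines[OF u(1), of l] u(2) by auto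
    obtain p where p: "p \<in> dom_BA"
      and decomp: "x = shift (B \<circ> A) l p + ((l - \<nu>)^2 / l) *\<^sub>C B (A (BA.R (BA.R x)))"
      using range_decomposition[OF l] by blast
    have "shift (B \<circ> A) l p + ((l - \<nu>)^2 / l) *\<^sub>C B (A (BA.R (BA.R x))) \<in> ?ran_BA"
      by (intro cvs.subspace_add[OF range_subspace] cvs.subspace_scale[OF range_subspace] r imageI p)
    then show "x \<in> ?ran_BA" by (simp only: decomp[symmetric])
  qed
  then show ?thesis unfolding op_range_def using closure_subset_eq by blast
qed

lemma dense_range_transfer:
  assumes l: "l \<noteq> 0" and dense_AB: "closure (op_range dom_AB (shift (A \<circ> B) l)) = UNIV"
  shows "closure (op_range dom_BA (shift (B \<circ> A) l)) = UNIV"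
proof -
  let ?ran_BA = "shift (B \<circ> A) l ` dom_BA" and ?ran_AB = "shift (A \<circ> B) l ` dom_AB"
  have P_closure: "P ` closure ?ran_AB \<subseteq> closure ?ran_BA"
    by (rule image_closure_into_closure[OF continuous_P]) (use P_maps_range closure_subset in blast)
  have closure_subspace: "cvs.subspace (closure ?ran_BA)" by (rule closure_subspace[OF range_subspace])
  have "x \<in> closure ?ran_BA" for x
  proof -
    obtain p where p: "p \<in> dom_BA"
      and decomp: "x = shift (B \<circ> A) l p + ((l - \<nu>)^2 / l) *\<^sub>C B (A (BA.R (BA.R x)))"
      using range_decomposition[OF l] by blast
    have "B (A (BA.R (BA.R x))) \<in> P ` closure ?ran_AB"
      unfolding BA_R2_eq_P using dense_AB unfolding op_range_def by simp
    then have "B (A (BA.R (BA.R x))) \<in> closure ?ran_BA" using P_closure by blast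
    moreover have "shift (B \<circ> A) l p \<in> closure ?ran_BA"
      by (rule closure_subset[THEN subsetD]) (use p in blast)
    ultimately have "shift (B \<circ> A) l p + ((l - \<nu>)^2 / l) *\<^sub>C B (A (BA.R (BA.R x))) \<in> closure ?ran_BA"
      by (intro cvs.subspace_add[OF closure_subspace] cvs.subspace_scale[OF closure_subspace])
    then show ?thesis by (simp only: decomp[symmetric])
  qed
  then show ?thesis unfolding op_range_def by blast
qed

text \<open>If \<open>ran(AB - l) + span F\<close> is the whole space, so is \<open>ran(BA - l) + span (P ` F)\<close>; with
  \<open>F = {}\<close> this also transfers surjectivity.\<close>

lemma range_complement_transfer:
  assumes l: "l \<noteq> 0" and F: "\<forall>y. \<exists>v\<in>op_range dom_AB (shift (A \<circ> B) l). y - v \<in> cvs.span F"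
  shows "\<forall>x. \<exists>v\<in>op_range dom_BA (shift (B \<circ> A) l). x - v \<in> cvs.span (P ` F)"
proof
  fix x
  let ?ran_BA = "shift (B \<circ> A) l ` dom_BA" and ?k = "(l - \<nu>)^2 / l"
  define w where "w = shift (A \<circ> B) \<mu> (A (BA.R (BA.R x)))"
  obtain p where p: "p \<in> dom_BA" "x = shift (B \<circ> A) l p + ?k *\<^sub>C P w"
    using range_decomposition[OF l] unfolding BA_R2_eq_P w_def by blast
  obtain u where u: "u \<in> dom_AB" "w - shift (A \<circ> B) l u \<in> cvs.span F"
    using F unfolding op_range_def by blast
  define v where "v = shift (A \<circ> B) l u"
  have Pv: "P v \<in> ?ran_BA" using P_shift[OF u(1), of l] unfolding v_def by auto
  have P_rest: "P (w - v) \<in> cvs.span (P ` F)" using linop_span[OF linear_op_P] u(2) v_def by blast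
  have "x = (shift (B \<circ> A) l p + ?k *\<^sub>C P v) + ?k *\<^sub>C P (w - v)"
    unfolding p(2)
    using linop_add[OF linear_op_P, of v "w - v"] by (simp add: scaleC_add_right add.assoc)
  moreover have "shift (B \<circ> A) l p + ?k *\<^sub>C P v \<in> ?ran_BA"
    by (intro cvs.subspace_add[OF range_subspace] cvs.subspace_scale[OF range_subspace] Pv imageI p(1))
  ultimately show "\<exists>v\<in>op_range dom_BA (shift (B \<circ> A) l). x - v \<in> cvs.span (P ` F)"
    unfolding op_range_def using cvs.span_scale[OF P_rest] by (intro bexI[of _ "shift (B \<circ> A) l p + ?k *\<^sub>C P v"]) auto
qed

lemma finite_codim_transfer:
  assumes "l \<noteq> 0" "finite_codim (op_range dom_AB (shift (A \<circ> B) l))"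
  shows "finite_codim (op_range dom_BA (shift (B \<circ> A) l))"
  using range_complement_transfer[OF assms(1)] assms(2) unfolding finite_codim_iff_span by blast

lemma surj_transfer:
  assumes l: "l \<noteq> 0" and surj_AB: "op_range dom_AB (shift (A \<circ> B) l) = UNIV"
  shows "op_range dom_BA (shift (B \<circ> A) l) = UNIV"
  using range_complement_transfer[OF l, of "{}"] surj_AB by auto

end

lemma product_shift_equivalences:
  fixes DA :: "'x::complex_banach set" and A :: "'x \<Rightarrow> 'y::complex_banach"
    and DB :: "'y set" and B :: "'y \<Rightarrow> 'x"
  assumes "linear_op DA A" "closed_op DA A" "linear_op DB B" "closed_op DB B"
    and "\<mu> \<in> resolvent_set (prod_dom DB B DA) (A \<circ> B)"
    and "\<nu> \<in> resolvent_set (prod_dom DA A DB) (B \<circ> A)"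
    and l: "l \<noteq> 0"
  shows "(inj_on (shift (A \<circ> B) l) (prod_dom DB B DA) \<longleftrightarrow> inj_on (shift (B \<circ> A) l) (prod_dom DA A DB))
    \<and> (closed (op_range (prod_dom DB B DA) (shift (A \<circ> B) l))
         \<longleftrightarrow> closed (op_range (prod_dom DA A DB) (shift (B \<circ> A) l)))
    \<and> (closure (op_range (prod_dom DB B DA) (shift (A \<circ> B) l)) = UNIV
         \<longleftrightarrow> closure (op_range (prod_dom DA A DB) (shift (B \<circ> A) l)) = UNIV)
    \<and> (op_range (prod_dom DB B DA) (shift (A \<circ> B) l) = UNIV
         \<longleftrightarrow> op_range (prod_dom DA A DB) (shift (B \<circ> A) l) = UNIV)
    \<and> (upper_semi_fredholm (prod_dom DB B DA) (shift (A \<circ> B) l)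
         \<longleftrightarrow> upper_semi_fredholm (prod_dom DA A DB) (shift (B \<circ> A) l))
    \<and> (lower_semi_fredholm (prod_dom DB B DA) (shift (A \<circ> B) l)
         \<longleftrightarrow> lower_semi_fredholm (prod_dom DA A DB) (shift (B \<circ> A) l))"
proof -
  interpret AB_to_BA: operator_pair DA A DB B \<mu> \<nu> by unfold_locales (use assms in auto)
  interpret BA_to_AB: operator_pair DB B DA A \<nu> \<mu> by unfold_locales (use assms in auto)
  let ?ran_AB = "op_range (prod_dom DB B DA) (shift (A \<circ> B) l)"
    and ?ran_BA = "op_range (prod_dom DA A DB) (shift (B \<circ> A) l)"
  have closed: "closed ?ran_AB \<longleftrightarrow> closed ?ran_BA"
    using AB_to_BA.closed_range_transfer[OF l] BA_to_AB.closed_range_transfer[OF l] by blast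
  have kernel: "finite_dimensional (op_kernel (prod_dom DB B DA) (shift (A \<circ> B) l))
      \<longleftrightarrow> finite_dimensional (op_kernel (prod_dom DA A DB) (shift (B \<circ> A) l))"
    using AB_to_BA.finite_dimensional_kernel_transfer[OF l]
      BA_to_AB.finite_dimensional_kernel_transfer[OF l] by blast
  have codim: "finite_codim ?ran_AB \<longleftrightarrow> finite_codim ?ran_BA"
    using AB_to_BA.finite_codim_transfer[OF l] BA_to_AB.finite_codim_transfer[OF l] by blast
  show ?thesis
  proof (intro conjI)
    show "inj_on (shift (A \<circ> B) l) (prod_dom DB B DA) \<longleftrightarrow> inj_on (shift (B \<circ> A) l) (prod_dom DA A DB)"
      using AB_to_BA.inj_transfer[OF l] BA_to_AB.inj_transfer[OF l] by blast
    show "closure ?ran_AB = UNIV \<longleftrightarrow> closure ?ran_BA = UNIV"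
      using AB_to_BA.dense_range_transfer[OF l] BA_to_AB.dense_range_transfer[OF l] by blast
    show "?ran_AB = UNIV \<longleftrightarrow> ?ran_BA = UNIV"
      using AB_to_BA.surj_transfer[OF l] BA_to_AB.surj_transfer[OF l] by blast
  qed (use closed kernel codim in \<open>simp_all add: upper_semi_fredholm_def lower_semi_fredholm_def\<close>)
qed

lemma spectra_transfer:
  fixes D1 :: "'a::complex_banach set" and D2 :: "'b::complex_banach set"
  assumes lin1: "linear_op D1 S1" and cl1: "closed_op D1 (shift S1 l)"
    and lin2: "linear_op D2 S2" and cl2: "closed_op D2 (shift S2 l)"
    and inj: "inj_on (shift S1 l) D1 \<longleftrightarrow> inj_on (shift S2 l) D2"
    and closed: "closed (op_range D1 (shift S1 l)) \<longleftrightarrow> closed (op_range D2 (shift S2 l))"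
    and dense: "closure (op_range D1 (shift S1 l)) = UNIV \<longleftrightarrow> closure (op_range D2 (shift S2 l)) = UNIV"
    and surj: "op_range D1 (shift S1 l) = UNIV \<longleftrightarrow> op_range D2 (shift S2 l) = UNIV"
    and upper: "upper_semi_fredholm D1 (shift S1 l) \<longleftrightarrow> upper_semi_fredholm D2 (shift S2 l)"
    and lower: "lower_semi_fredholm D1 (shift S1 l) \<longleftrightarrow> lower_semi_fredholm D2 (shift S2 l)"
  shows "(l \<in> ap_spectrum D1 S1 \<longleftrightarrow> l \<in> ap_spectrum D2 S2)
    \<and> (l \<in> cont_spectrum D1 S1 \<longleftrightarrow> l \<in> cont_spectrum D2 S2)
    \<and> (l \<in> res_spectrum D1 S1 \<longleftrightarrow> l \<in> res_spectrum D2 S2)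
    \<and> (l \<in> ess_spectrum D1 S1 \<longleftrightarrow> l \<in> ess_spectrum D2 S2)"
proof -
  have ap: "l \<in> ap_spectrum D1 S1 \<longleftrightarrow> l \<in> ap_spectrum D2 S2"
    using not_ap_spectrum_iff[OF lin1 cl1] not_ap_spectrum_iff[OF lin2 cl2] inj closed by blast
  have "l \<in> resolvent_set D1 S1 \<longleftrightarrow> l \<in> resolvent_set D2 S2"
    unfolding resolvent_set_iff_bij[OF lin1 cl1] resolvent_set_iff_bij[OF lin2 cl2] bij_betw_def
    using inj surj unfolding op_range_def by blast
  then show ?thesis
    unfolding cont_spectrum_def spectrum_op_def res_spectrum_def ess_spectrum_def fredholm_def
    using ap inj dense upper lower by blast
qed

text \<open>For \<open>l \<noteq> 0\<close>, \<open>AB\<close> and \<open>BA\<close> agree at \<open>l\<close> on the four spectra; both are closed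
  operators as soon as their resolvent sets are nonempty.\<close>

lemma product_spectra_equivalences:
  fixes DA :: "'x::complex_banach set" and A :: "'x \<Rightarrow> 'y::complex_banach"
    and DB :: "'y set" and B :: "'y \<Rightarrow> 'x"
  assumes "linear_op DA A" "closed_op DA A" "linear_op DB B" "closed_op DB B"
    and \<mu>: "\<mu> \<in> resolvent_set (prod_dom DB B DA) (A \<circ> B)"
    and \<nu>: "\<nu> \<in> resolvent_set (prod_dom DA A DB) (B \<circ> A)"
    and l: "l \<noteq> 0"
  shows "(l \<in> ap_spectrum (prod_dom DB B DA) (A \<circ> B) \<longleftrightarrow> l \<in> ap_spectrum (prod_dom DA A DB) (B \<circ> A))
    \<and> (l \<in> cont_spectrum (prod_dom DB B DA) (A \<circ> B) \<longleftrightarrow> l \<in> cont_spectrum (prod_dom DA A DB) (B \<circ> A))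
    \<and> (l \<in> res_spectrum (prod_dom DB B DA) (A \<circ> B) \<longleftrightarrow> l \<in> res_spectrum (prod_dom DA A DB) (B \<circ> A))
    \<and> (l \<in> ess_spectrum (prod_dom DB B DA) (A \<circ> B) \<longleftrightarrow> l \<in> ess_spectrum (prod_dom DA A DB) (B \<circ> A))"
proof -
  interpret AB: resolvent_point "prod_dom DB B DA" "A \<circ> B" \<mu>
    by unfold_locales (rule linear_op_prod[OF assms(1,3)], rule \<mu>)
  interpret BA: resolvent_point "prod_dom DA A DB" "B \<circ> A" \<nu>
    by unfold_locales (rule linear_op_prod[OF assms(3,1)], rule \<nu>)
  show ?thesis
    using product_shift_equivalences[OF assms]
    by (elim conjE) (rule spectra_transfer[OF AB.lin AB.closed_op_shift BA.lin BA.closed_op_shift])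
qed

theorem theorem1p5:
  fixes DA :: "'x::complex_banach set" and A :: "'x \<Rightarrow> 'y::complex_banach"
    and DB :: "'y set" and B :: "'y \<Rightarrow> 'x"
  assumes "linear_op DA A" "closed_op DA A" "densely_defined DA"
    and "linear_op DB B" "closed_op DB B" "densely_defined DB"
    and "resolvent_set (prod_dom DB B DA) (A \<circ> B) \<noteq> {}"
    and "resolvent_set (prod_dom DA A DB) (B \<circ> A) \<noteq> {}"
  shows "(\<forall>l. l \<noteq> 0 \<longrightarrow>
           (closed (op_range (prod_dom DB B DA) (shift (A \<circ> B) l))
              \<longleftrightarrow> closed (op_range (prod_dom DA A DB) (shift (B \<circ> A) l))) \<and>
           (closure (op_range (prod_dom DB B DA) (shift (A \<circ> B) l)) = UNIV
              \<longleftrightarrow> closure (op_range (prod_dom DA A DB) (shift (B \<circ> A) l)) = UNIV) \<and>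
           (upper_semi_fredholm (prod_dom DB B DA) (shift (A \<circ> B) l)
              \<longleftrightarrow> upper_semi_fredholm (prod_dom DA A DB) (shift (B \<circ> A) l)) \<and>
           (lower_semi_fredholm (prod_dom DB B DA) (shift (A \<circ> B) l)
              \<longleftrightarrow> lower_semi_fredholm (prod_dom DA A DB) (shift (B \<circ> A) l)))
      \<and> ap_spectrum (prod_dom DB B DA) (A \<circ> B) - {0} = ap_spectrum (prod_dom DA A DB) (B \<circ> A) - {0}
      \<and> cont_spectrum (prod_dom DB B DA) (A \<circ> B) - {0} = cont_spectrum (prod_dom DA A DB) (B \<circ> A) - {0}
      \<and> res_spectrum (prod_dom DB B DA) (A \<circ> B) - {0} = res_spectrum (prod_dom DA A DB) (B \<circ> A) - {0}
      \<and> ess_spectrum (prod_dom DB B DA) (A \<circ> B) - {0} = ess_spectrum (prod_dom DA A DB) (B \<circ> A) - {0}"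
proof -
  obtain \<mu> \<nu> where \<mu>: "\<mu> \<in> resolvent_set (prod_dom DB B DA) (A \<circ> B)"
    and \<nu>: "\<nu> \<in> resolvent_set (prod_dom DA A DB) (B \<circ> A)" using assms(7,8) by blast
  note ranges = product_shift_equivalences[OF assms(1,2,4,5) \<mu> \<nu>]
  note spectra = product_spectra_equivalences[OF assms(1,2,4,5) \<mu> \<nu>]
  show ?thesis using ranges spectra by blast
qed

end
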